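(* Let $T = \{t_1,\dots,t_n\}$ be a set of finite traces over $\Sigma = 2^{\mathrm{AP}}$ and let $\varphi = \forall\pi_1\dots\forall\pi_{k_T}.\ \psi$ be a universally-safe HyperLTL formula. Then $T$ is a bad prefix of $\varphi$ (i.e., $T \in \mathrm{Bad}(\mathcal{L}(\varphi))$) if and only if the HyperLTL formula $$\varphi' := \exists\pi'_1\dots\exists\pi'_n\ \forall\pi_1\dots\forall\pi_{k_T}.\ \pi'_1 \ge t_1 \wedge \dots \wedge \pi'_n \ge t_n \wedge \psi$$ is unsatisfiable.
   Context: HyperLTL formulas over a set of atomic propositions AP are generated by $\psi ::= \exists\pi.\psi \mid \forall\pi.\psi \mid \phi$, $\phi ::= a_\pi \mid \neg\phi \mid \phi\vee\phi \mid \bigcirc\phi \mid \phi\,\mathcal{U}\,\phi$. For $T \subseteq \Sigma^\omega$ and a trace assignment $\Pi$: $\Pi \models_T \exists\pi.\psi$ iff some $t \in T$ has $\Pi[\pi\mapsto t]\models_T\psi$; $\forall$ dually; $\Pi\models_T a_\pi$ iff $a \in \Pi(\pi)[0]$; Boolean connectives as usual; $\Pi\models_T\bigcirc\phi$ iff $\Pi[1,\infty]\models_T\phi$; $\Pi\models_T\phi_1\mathcal{U}\phi_2$ iff $\exists i\ge0$ with $\Pi[i,\infty]\models_T\phi_2$ and $\Pi[j,\infty]\models_T\phi_1$ for all $j<i$. $T$ satisfies $\varphi$ if the empty assignment satisfies it; $\mathcal{L}(\varphi) = \{T \subseteq \Sigma^\omega \mid T \text{ satisfies } \varphi\}$; a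 formula is satisfiable if some (nonempty) set of traces satisfies it. A universally-safe HyperLTL formula has the form $\forall\pi_1\dots\forall\pi_k.\psi$ with $\psi$ a quantifier-free safety formula. For a trace variable $\pi'$ and finite trace $t = t[0]\cdots t[m-1]$, $\pi' \ge t$ abbreviates the quantifier-free formula $\bigwedge_{j<m}\bigcirc^j\big(\bigwedge_{a\in t[j]} a_{\pi'} \wedge \bigwedge_{a \notin t[j]} \neg a_{\pi'}\big)$, stating that $t$ is a prefix of the trace bound to $\pi'$. For finite $T \subseteq \Sigma^*$ and $T' \subseteq \Sigma^\omega$, $T \le T'$ means every $t \in T$ is a prefix of some $t' \in T'$; $\mathrm{Bad}(\mathbf{S}) = \{T \text{ finite} \mid \forall T'.\ T \le T' \Rightarrow T' \notin \mathbf{S}\}$. *)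

theory Defs
  imports Main
begin

type_synonym 'a trace = "nat \<Rightarrow> 'a set"
type_synonym 'a ftrace = "'a set list"
type_synonym ('a,'v) assignment = "'v \<Rightarrow> 'a trace option"

datatype ('a,'v) qf =
    Prop 'a 'v
  | Neg "('a,'v) qf"
  | Or "('a,'v) qf" "('a,'v) qf"
  | Next "('a,'v) qf"
  | Until "('a,'v) qf" "('a,'v) qf"

datatype ('a,'v) hyper =
    Exists 'v "('a,'v) hyper"
  | Forall 'v "('a,'v) hyper"
  | QF "('a,'v) qf"

fun qfv :: "('a,'v) qf \<Rightarrow> 'v set" where
  "qfv (Prop a v) = {v}"
| "qfv (Neg p) = qfv p"
| "qfv (Or p q) = qfv p \<union> qfv q"
| "qfv (Next p) = qfv p"
| "qfv (Until p q) = qfv p \<union> qfv q"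

definition shift :: "('a,'v) assignment \<Rightarrow> nat \<Rightarrow> ('a,'v) assignment" where
  "shift \<Pi> i = (\<lambda>v. map_option (\<lambda>t j. t (i + j)) (\<Pi> v))"

fun qsat :: "('a,'v) assignment \<Rightarrow> ('a,'v) qf \<Rightarrow> bool" where
  "qsat \<Pi> (Prop a v) = (case \<Pi> v of Some t \<Rightarrow> a \<in> t 0 | None \<Rightarrow> False)"
| "qsat \<Pi> (Neg p) = (\<not> qsat \<Pi> p)"
| "qsat \<Pi> (Or p q) = (qsat \<Pi> p \<or> qsat \<Pi> q)"
| "qsat \<Pi> (Next p) = qsat (shift \<Pi> 1) p"
| "qsat \<Pi> (Until p q) =
     (\<exists>i. qsat (shift \<Pi> i) q \<and> (\<forall>j<i. qsat (shift \<Pi> j) p))"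

fun hsat :: "'a trace set \<Rightarrow> ('a,'v) assignment \<Rightarrow> ('a,'v) hyper \<Rightarrow> bool" where
  "hsat T \<Pi> (Exists v p) = (\<exists>t\<in>T. hsat T (\<Pi>(v \<mapsto> t)) p)"
| "hsat T \<Pi> (Forall v p) = (\<forall>t\<in>T. hsat T (\<Pi>(v \<mapsto> t)) p)"
| "hsat T \<Pi> (QF p) = qsat \<Pi> p"

definition satisfies :: "'a trace set \<Rightarrow> ('a,'v) hyper \<Rightarrow> bool" where
  "satisfies T \<phi> = hsat T Map.empty \<phi>"

definition lang :: "('a,'v) hyper \<Rightarrow> 'a trace set set" where
  "lang \<phi> = {T. satisfies T \<phi>}"

definition satisfiable :: "('a,'v) hyper \<Rightarrow> bool" where
  "satisfiable \<phi> = (\<exists>T. T \<noteq> {} \<and> satisfies T \<phi>)"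

definition foralls :: "'v list \<Rightarrow> ('a,'v) hyper \<Rightarrow> ('a,'v) hyper" where
  "foralls vs p = foldr Forall vs p"

definition existss :: "'v list \<Rightarrow> ('a,'v) hyper \<Rightarrow> ('a,'v) hyper" where
  "existss vs p = foldr Exists vs p"

definition qf_safety :: "('a,'v) qf \<Rightarrow> bool" where
  "qf_safety \<psi> = (\<forall>\<Pi>. \<not> qsat \<Pi> \<psi> \<longrightarrow>
      (\<exists>i. \<forall>\<Pi>'. dom \<Pi>' = dom \<Pi> \<and>
           (\<forall>v t t'. \<Pi> v = Some t \<longrightarrow> \<Pi>' v = Some t' \<longrightarrow> (\<forall>j<i. t j = t' j))
           \<longrightarrow> \<not> qsat \<Pi>' \<psi>))"

definition And :: "('a,'v) qf \<Rightarrow> ('a,'v) qf \<Rightarrow> ('a,'v) qf" where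
  "And p q = Neg (Or (Neg p) (Neg q))"

fun nexts :: "nat \<Rightarrow> ('a,'v) qf \<Rightarrow> ('a,'v) qf" where
  "nexts 0 p = p"
| "nexts (Suc n) p = Next (nexts n p)"

definition aps :: "'a::finite list" where
  "aps = (SOME xs. set xs = UNIV \<and> distinct xs)"

definition lit :: "'v \<Rightarrow> 'a set \<Rightarrow> 'a \<Rightarrow> ('a,'v) qf" where
  "lit v s a = (if a \<in> s then Prop a v else Neg (Prop a v))"

definition letter :: "'v \<Rightarrow> 'a::finite set \<Rightarrow> ('a,'v) qf" where
  "letter v s = foldr (\<lambda>a acc. And (lit v s a) acc) (tl aps) (lit v s (hd aps))"

text \<open>prefix_conj v t chi  =  (v \<ge> t) \<and> chi\<close>
definition prefix_conj :: "'v \<Rightarrow> 'a::finite ftrace \<Rightarrow> ('a,'v) qf \<Rightarrow> ('a,'v) qf" where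
  "prefix_conj v t \<chi> = foldr (\<lambda>j acc. And (nexts j (letter v (t ! j))) acc) [0..<length t] \<chi>"

definition prefix_conjs :: "('v \<times> 'a::finite ftrace) list \<Rightarrow> ('a,'v) qf \<Rightarrow> ('a,'v) qf" where
  "prefix_conjs xs \<psi> = foldr (\<lambda>(v,t) acc. prefix_conj v t acc) xs \<psi>"

definition prefix_le :: "'a ftrace set \<Rightarrow> 'a trace set \<Rightarrow> bool" where
  "prefix_le T T' = (\<forall>t\<in>T. \<exists>t'\<in>T'. \<forall>j<length t. t ! j = t' j)"

definition Bad :: "'a trace set set \<Rightarrow> 'a ftrace set set" where
  "Bad S = {T. finite T \<and> (\<forall>T'. prefix_le T T' \<longrightarrow> T' \<notin> S)}"

end

theory Submission
  imports Defs
begin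

text \<open>The prefix constraints of \<open>\<phi>'\<close> speak only about the existentially quantified
  \<open>\<pi>'\<^sub>i\<close>, while \<open>\<psi>\<close> speaks only about the universally quantified \<open>\<pi>\<^sub>j\<close>. Hence a nonempty
  set of traces satisfies \<open>\<phi>'\<close> iff it contains an extension of every \<open>t\<^sub>i\<close> and satisfies
  \<open>\<phi>\<close>; so \<open>\<phi>'\<close> is satisfiable iff some extension of \<open>T\<close> lies in \<open>\<L>(\<phi>)\<close>, i.e. iff \<open>T\<close> is
  not a bad prefix.\<close>

lemma qsat_cong:
  "(\<forall>v\<in>qfv \<chi>. \<Pi> v = \<Pi>' v) \<Longrightarrow> qsat \<Pi> \<chi> = qsat \<Pi>' \<chi>"
proof (induction \<chi> arbitrary: \<Pi> \<Pi>')
  case (Until p q)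
  then have "qsat (shift \<Pi> i) p = qsat (shift \<Pi>' i) p" "qsat (shift \<Pi> i) q = qsat (shift \<Pi>' i) q"
    for i by (simp_all add: shift_def)
  then show ?case by simp
next
  case (Or p q)
  then show ?case by (metis UnCI qfv.simps(3) qsat.simps(3))
qed (simp_all add: shift_def)

lemma qsat_And [simp]: "qsat \<Pi> (And p q) \<longleftrightarrow> qsat \<Pi> p \<and> qsat \<Pi> q"
  by (simp add: And_def)

lemma shift_0 [simp]: "shift \<Pi> 0 = \<Pi>"
  by (simp add: shift_def option.map_ident)

lemma shift_shift [simp]: "shift (shift \<Pi> i) j = shift \<Pi> (i + j)"
  by (simp add: shift_def fun_eq_iff option.map_comp o_def add.assoc)

lemma qsat_nexts: "qsat \<Pi> (nexts n p) = qsat (shift \<Pi> n) p"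
  by (induction n arbitrary: \<Pi>) simp_all

lemma set_aps: "set (aps :: 'a::finite list) = UNIV"
proof -
  obtain xs :: "'a list" where "set xs = UNIV \<and> distinct xs"
    using finite_distinct_list[OF finite_UNIV] by blast
  then show ?thesis
    unfolding aps_def by (metis (mono_tags, lifting) someI)
qed

lemma qsat_letter:
  assumes "\<Pi> v = Some t"
  shows "qsat \<Pi> (letter v s) \<longleftrightarrow> t 0 = s"
proof -
  have "qsat \<Pi> (foldr (\<lambda>a acc. And (lit v s a) acc) as b) \<longleftrightarrow>
      (\<forall>a\<in>set as. qsat \<Pi> (lit v s a)) \<and> qsat \<Pi> b" for as b
    by (induction as) auto
  moreover have "set (aps :: 'a list) = insert (hd aps) (set (tl aps))"
    using set_aps by (metis UNIV_not_empty list.collapse list.set(1,2))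
  ultimately have "qsat \<Pi> (letter v s) \<longleftrightarrow> (\<forall>a\<in>set aps. qsat \<Pi> (lit v s a))"
    unfolding letter_def by auto
  also have "\<dots> \<longleftrightarrow> (\<forall>a. qsat \<Pi> (lit v s a))"
    by (simp add: set_aps)
  also have "\<dots> \<longleftrightarrow> t 0 = s"
    using assms by (auto simp: lit_def)
  finally show ?thesis .
qed

definition ftrace_prefix :: "'a ftrace \<Rightarrow> 'a trace \<Rightarrow> bool" where
  "ftrace_prefix t t' \<longleftrightarrow> (\<forall>j<length t. t ! j = t' j)"

lemma prefix_le_iff: "prefix_le T T' \<longleftrightarrow> (\<forall>t\<in>T. \<exists>t'\<in>T'. ftrace_prefix t t')"
  by (simp add: prefix_le_def ftrace_prefix_def)

lemma qsat_prefix_conj: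
  assumes "\<Pi> v = Some t'"
  shows "qsat \<Pi> (prefix_conj v t \<chi>) \<longleftrightarrow> ftrace_prefix t t' \<and> qsat \<Pi> \<chi>"
proof -
  have "qsat \<Pi> (nexts j (letter v (t ! j))) \<longleftrightarrow> t ! j = t' j" for j
    using assms by (auto simp: qsat_nexts shift_def qsat_letter)
  then have "qsat \<Pi> (foldr (\<lambda>j acc. And (nexts j (letter v (t ! j))) acc) js \<chi>) \<longleftrightarrow>
      (\<forall>j\<in>set js. t ! j = t' j) \<and> qsat \<Pi> \<chi>" for js
    by (induction js) auto
  then show ?thesis
    by (auto simp: prefix_conj_def ftrace_prefix_def)
qed

lemma qsat_prefix_conjs:
  assumes "fst ` set xs \<subseteq> dom \<Pi>"
  shows "qsat \<Pi> (prefix_conjs xs \<psi>) \<longleftrightarrow>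
    (\<forall>(v, t)\<in>set xs. ftrace_prefix t (the (\<Pi> v))) \<and> qsat \<Pi> \<psi>"
  using assms by (induction xs) (auto simp: prefix_conjs_def qsat_prefix_conj)

definition variant_on ::
    "'a trace set \<Rightarrow> 'v set \<Rightarrow> ('a,'v) assignment \<Rightarrow> ('a,'v) assignment \<Rightarrow> bool" where
  "variant_on T V \<Pi> \<Pi>' \<longleftrightarrow> (\<forall>v\<in>V. \<Pi>' v \<in> Some ` T) \<and> (\<forall>v. v \<notin> V \<longrightarrow> \<Pi>' v = \<Pi> v)"

lemma variant_on_empty: "variant_on T {} \<Pi> \<Pi>' \<longleftrightarrow> \<Pi>' = \<Pi>"
  by (auto simp: variant_on_def)

lemma variant_on_insert:
  "variant_on T (insert p V) \<Pi> \<Pi>' \<longleftrightarrow> (\<exists>t\<in>T. variant_on T V (\<Pi>(p \<mapsto> t)) \<Pi>')"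
  by (auto simp: variant_on_def)

lemma ex_variant_on:
  assumes "t \<in> T"
  shows "\<exists>\<Pi>'. variant_on T V \<Pi> \<Pi>'"
  using assms by (auto simp: variant_on_def intro!: exI[of _ "\<lambda>v. if v \<in> V then Some t else \<Pi> v"])

lemma hsat_existss:
  "hsat T \<Pi> (existss ps \<Phi>) \<longleftrightarrow> (\<exists>\<Pi>'. variant_on T (set ps) \<Pi> \<Pi>' \<and> hsat T \<Pi>' \<Phi>)"
  by (induction ps arbitrary: \<Pi>) (auto simp: existss_def variant_on_empty variant_on_insert)

lemma hsat_foralls:
  "hsat T \<Pi> (foralls vs \<Phi>) \<longleftrightarrow> (\<forall>\<Pi>'. variant_on T (set vs) \<Pi> \<Pi>' \<longrightarrow> hsat T \<Pi>' \<Phi>)"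
  by (induction vs arbitrary: \<Pi>) (auto simp: foralls_def variant_on_empty variant_on_insert)

lemma hsat_foralls_QF_cong:
  assumes "qfv \<psi> \<subseteq> set vs"
  shows "hsat T \<Pi> (foralls vs (QF \<psi>)) \<longleftrightarrow> hsat T \<Pi>' (foralls vs (QF \<psi>))"
proof -
  have "hsat T \<Pi>\<^sub>2 (foralls vs (QF \<psi>))" if "hsat T \<Pi>\<^sub>1 (foralls vs (QF \<psi>))" for \<Pi>\<^sub>1 \<Pi>\<^sub>2
    unfolding hsat_foralls hsat.simps
  proof (intro allI impI)
    fix \<Pi>'' assume "variant_on T (set vs) \<Pi>\<^sub>2 \<Pi>''"
    then have "variant_on T (set vs) \<Pi>\<^sub>1 (\<lambda>v. if v \<in> set vs then \<Pi>'' v else \<Pi>\<^sub>1 v)"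
      by (simp add: variant_on_def)
    then have "qsat (\<lambda>v. if v \<in> set vs then \<Pi>'' v else \<Pi>\<^sub>1 v) \<psi>"
      using that unfolding hsat_foralls by simp
    then show "qsat \<Pi>'' \<psi>"
      using assms by (subst qsat_cong) auto
  qed
  then show ?thesis by blast
qed

lemma ex_variant_on_prefixes:
  assumes "distinct (map fst xs)"
  shows "(\<exists>\<Pi>. variant_on T (fst ` set xs) Map.empty \<Pi> \<and>
            (\<forall>(v, t)\<in>set xs. ftrace_prefix t (the (\<Pi> v))))
         \<longleftrightarrow> prefix_le (snd ` set xs) T"
proof
  assume "\<exists>\<Pi>. variant_on T (fst ` set xs) Map.empty \<Pi> \<and> (\<forall>(v, t)\<in>set xs. ftrace_prefix t (the (\<Pi> v)))"
  then show "prefix_le (snd ` set xs) T"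
    unfolding prefix_le_iff variant_on_def by fastforce
next
  assume "prefix_le (snd ` set xs) T"
  then obtain f where f: "\<And>t. t \<in> snd ` set xs \<Longrightarrow> f t \<in> T \<and> ftrace_prefix t (f t)"
    unfolding prefix_le_iff by metis
  have "map_of xs v = Some t" if "(v, t) \<in> set xs" for v t
    using assms that by simp
  then show "\<exists>\<Pi>. variant_on T (fst ` set xs) Map.empty \<Pi> \<and> (\<forall>(v, t)\<in>set xs. ftrace_prefix t (the (\<Pi> v)))"
    using f by (intro exI[of _ "map_option f \<circ> map_of xs"])
      (fastforce simp: variant_on_def map_of_eq_None_iff)
qed

lemma hsat_foralls_prefix_conjs:
  assumes "fst ` set xs \<subseteq> dom \<Pi>" and "fst ` set xs \<inter> set vs = {}"
    and "qfv \<psi> \<subseteq> set vs" and "T \<noteq> {}"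
  shows "hsat T \<Pi> (foralls vs (QF (prefix_conjs xs \<psi>))) \<longleftrightarrow>
    (\<forall>(v, t)\<in>set xs. ftrace_prefix t (the (\<Pi> v))) \<and> satisfies T (foralls vs (QF \<psi>))"
    (is "_ \<longleftrightarrow> ?prefixes \<Pi> \<and> _")
proof -
  have "qsat \<Pi>' (prefix_conjs xs \<psi>) \<longleftrightarrow> ?prefixes \<Pi> \<and> qsat \<Pi>' \<psi>"
    if "variant_on T (set vs) \<Pi> \<Pi>'" for \<Pi>'
  proof -
    have "\<forall>v\<in>fst ` set xs. \<Pi>' v = \<Pi> v"
      using that assms(2) by (auto simp: variant_on_def)
    then show ?thesis
      using assms(1) by (subst qsat_prefix_conjs) (force simp: dom_def)+
  qed
  then have "hsat T \<Pi> (foralls vs (QF (prefix_conjs xs \<psi>))) \<longleftrightarrow>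
      (\<forall>\<Pi>'. variant_on T (set vs) \<Pi> \<Pi>' \<longrightarrow> ?prefixes \<Pi> \<and> qsat \<Pi>' \<psi>)"
    unfolding hsat_foralls by auto
  also have "\<dots> \<longleftrightarrow> ?prefixes \<Pi> \<and> hsat T \<Pi> (foralls vs (QF \<psi>))"
    using assms(4) ex_variant_on[of _ T "set vs" \<Pi>] unfolding hsat_foralls hsat.simps by blast
  also have "\<dots> \<longleftrightarrow> ?prefixes \<Pi> \<and> satisfies T (foralls vs (QF \<psi>))"
    unfolding satisfies_def using hsat_foralls_QF_cong[OF assms(3)] by blast
  finally show ?thesis .
qed

lemma satisfies_existss_prefix_conjs_iff:
  assumes "distinct (map fst xs)" and "fst ` set xs \<inter> set vs = {}"
    and "qfv \<psi> \<subseteq> set vs" and "T \<noteq> {}"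
  shows "satisfies T (existss (map fst xs) (foralls vs (QF (prefix_conjs xs \<psi>)))) \<longleftrightarrow>
    prefix_le (snd ` set xs) T \<and> satisfies T (foralls vs (QF \<psi>))"
proof -
  have "fst ` set xs \<subseteq> dom \<Pi>" if "variant_on T (fst ` set xs) Map.empty \<Pi>" for \<Pi>
    using that by (auto simp: variant_on_def)
  then have "satisfies T (existss (map fst xs) (foralls vs (QF (prefix_conjs xs \<psi>)))) \<longleftrightarrow>
      (\<exists>\<Pi>. variant_on T (fst ` set xs) Map.empty \<Pi> \<and>
        (\<forall>(v, t)\<in>set xs. ftrace_prefix t (the (\<Pi> v))) \<and> satisfies T (foralls vs (QF \<psi>)))"
    unfolding satisfies_def[of T "existss _ _"] hsat_existss
    using hsat_foralls_prefix_conjs[OF _ assms(2-4)] by auto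
  then show ?thesis
    using ex_variant_on_prefixes[OF assms(1)] by blast
qed

theorem theorem9:
  fixes ts :: "'a::finite ftrace list" and vs ps :: "'v list" and \<psi> :: "('a,'v) qf"
  assumes "ts \<noteq> []"
    and "qf_safety \<psi>"
    and "qfv \<psi> \<subseteq> set vs"
    and "length ps = length ts"
    and "distinct ps"
    and "set ps \<inter> set vs = {}"
  shows "set ts \<in> Bad (lang (foralls vs (QF \<psi>))) \<longleftrightarrow>
         \<not> satisfiable (existss ps (foralls vs (QF (prefix_conjs (zip ps ts) \<psi>))))"
proof -
  have ps: "map fst (zip ps ts) = ps"
    using assms(4) by simp
  have vars: "fst ` set (zip ps ts) = set ps" and traces: "snd ` set (zip ps ts) = set ts"
    using assms(4) by (metis ps set_map, metis map_snd_zip set_map)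
  have models: "satisfies T (existss ps (foralls vs (QF (prefix_conjs (zip ps ts) \<psi>)))) \<longleftrightarrow>
      prefix_le (set ts) T \<and> satisfies T (foralls vs (QF \<psi>))" if "T \<noteq> {}" for T
    using satisfies_existss_prefix_conjs_iff[of "zip ps ts" vs \<psi> T, unfolded ps vars traces]
      assms(3,5,6) that by simp
  have nonempty: "T \<noteq> {}" if "prefix_le (set ts) T" for T :: "'a trace set"
    using that assms(1) by (auto simp: prefix_le_def)
  have "satisfiable (existss ps (foralls vs (QF (prefix_conjs (zip ps ts) \<psi>)))) \<longleftrightarrow>
      (\<exists>T. prefix_le (set ts) T \<and> satisfies T (foralls vs (QF \<psi>)))"
    unfolding satisfiable_def using models nonempty by metis
  then show ?thesis
    unfolding Bad_def lang_def by simp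
qed

end
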